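(* Let $(X,d^\star)$ be a $\star$-metric space. Then the topological space $(X,\mathscr{T}_{d^\star})$ is metrizable, i.e. there exists a metric on $X$ inducing the topology $\mathscr{T}_{d^\star}$.
   Context: A $t$-definer is a function $\star:[0,\infty)\times[0,\infty)\to[0,\infty)$ such that for all $a,b,c\ge 0$: $a\star b=b\star a$; $a\star(b\star c)=(a\star b)\star c$; if $a\le b$ then $a\star c\le b\star c$; $a\star 0=a$; and $\star$ is continuous in its first variable with respect to the Euclidean topology. Given a nonempty set $X$ and a $t$-definer $\star$, a $\star$-metric on $X$ is a function $d^\star:X\times X\to[0,\infty)$ such that for all $x,y,z\in X$: $d^\star(x,y)=0$ iff $x=y$; $d^\star(x,y)=d^\star(y,x)$; and $d^\star(x,y)\le d^\star(x,z)\star d^\star(z,y)$. The pair $(X,d^\star)$ is a $\star$-metric space. For $a\in X$, $r>0$, put $B_{d^\star}(a,r)=\{x\in X: d^\star(a,x)<r\}$, and let $\mathscr{T}_{d^\star}$ be the family of all $U\subseteq X$ such that for each $a\in U$ there is $r>0$ with $B_{d^\star}(a,r)\subseteq U$ (this is a topology on $X$). *)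

theory Defs
  imports "HOL-Analysis.Analysis"
begin

text \<open>A t-definer: a binary operation on [0,\<infinity>), modelled as a real function whose
  relevant behaviour is on nonnegative arguments.\<close>
definition t_definer :: "(real \<Rightarrow> real \<Rightarrow> real) \<Rightarrow> bool" where
  "t_definer star \<longleftrightarrow>
     (\<forall>a b. 0 \<le> a \<longrightarrow> 0 \<le> b \<longrightarrow> 0 \<le> star a b) \<and>
     (\<forall>a b. 0 \<le> a \<longrightarrow> 0 \<le> b \<longrightarrow> star a b = star b a) \<and>
     (\<forall>a b c. 0 \<le> a \<longrightarrow> 0 \<le> b \<longrightarrow> 0 \<le> c \<longrightarrow> star a (star b c) = star (star a b) c) \<and>
     (\<forall>a b c. 0 \<le> a \<longrightarrow> 0 \<le> b \<longrightarrow> 0 \<le> c \<longrightarrow> a \<le> b \<longrightarrow> star a c \<le> star b c) \<and>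
     (\<forall>a. 0 \<le> a \<longrightarrow> star a 0 = a) \<and>
     (\<forall>b. 0 \<le> b \<longrightarrow> continuous_on {0..} (\<lambda>a. star a b))"

definition star_metric :: "(real \<Rightarrow> real \<Rightarrow> real) \<Rightarrow> 'a set \<Rightarrow> ('a \<Rightarrow> 'a \<Rightarrow> real) \<Rightarrow> bool" where
  "star_metric star X d \<longleftrightarrow>
     (\<forall>x\<in>X. \<forall>y\<in>X. 0 \<le> d x y) \<and>
     (\<forall>x\<in>X. \<forall>y\<in>X. d x y = 0 \<longleftrightarrow> x = y) \<and>
     (\<forall>x\<in>X. \<forall>y\<in>X. d x y = d y x) \<and>
     (\<forall>x\<in>X. \<forall>y\<in>X. \<forall>z\<in>X. d x y \<le> star (d x z) (d z y))"

definition star_ball :: "'a set \<Rightarrow> ('a \<Rightarrow> 'a \<Rightarrow> real) \<Rightarrow> 'a \<Rightarrow> real \<Rightarrow> 'a set" where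
  "star_ball X d a r = {x \<in> X. d a x < r}"

definition star_topology :: "'a set \<Rightarrow> ('a \<Rightarrow> 'a \<Rightarrow> real) \<Rightarrow> 'a topology" where
  "star_topology X d =
     topology (\<lambda>U. U \<subseteq> X \<and> (\<forall>a\<in>U. \<exists>r>0. star_ball X d a r \<subseteq> U))"

end

theory Submission
  imports Defs
begin

text \<open>Embed each point x as the function min (d x _) 1 and take the sup distance \<rho> of
  these bounded functions (Kuratowski's embedding of the truncated d). Since d is nonnegative and
  separates points, \<rho> is a metric, and \<rho> x y < min r 1 forces d x y < r. Conversely,
  continuity of \<star> at 0 and monotonicity give \<delta> \<star> b < b + \<epsilon> uniformly for
  b \<in> [0,1] once \<delta> is small, so by the \<star>-triangle inequality d x y < \<delta> forces
  \<rho> x y \<le> \<epsilon>. Hence d-balls and \<rho>-balls generate the same topology.\<close>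

lemma t_definer_commute:
  assumes "t_definer s" "0 \<le> a" "0 \<le> b"
  shows "s a b = s b a"
  using assms unfolding t_definer_def by (elim conjE) (simp only:)

lemma t_definer_mono_left:
  assumes "t_definer s" "0 \<le> a" "a \<le> b" "0 \<le> c"
  shows "s a c \<le> s b c"
  using assms unfolding t_definer_def by (elim conjE) (simp only:)

lemma t_definer_mono_right:
  assumes "t_definer s" "0 \<le> a" "0 \<le> b" "b \<le> c"
  shows "s a b \<le> s a c"
  using t_definer_commute[OF assms(1)] t_definer_mono_left[OF assms(1)] assms(2-)
  by (metis order_trans)

lemma t_definer_zero_left:
  assumes "t_definer s" "0 \<le> b"
  shows "s 0 b = b"
proof -
  have "\<forall>a\<ge>0. s a 0 = a" using assms(1) unfolding t_definer_def by (elim conjE) assumption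
  then show ?thesis using t_definer_commute[OF assms(1) order_refl assms(2)] assms(2) by simp
qed

lemma t_definer_tendsto_at_right_0:
  assumes "t_definer s" "0 \<le> b"
  shows "((\<lambda>a. s a b) \<longlongrightarrow> b) (at_right 0)"
proof -
  have "continuous_on {0..} (\<lambda>a. s a b)"
    using assms unfolding t_definer_def by (elim conjE) (simp only:)
  then have "((\<lambda>a. s a b) \<longlongrightarrow> s 0 b) (at 0 within {0..})"
    by (simp add: continuous_on_def)
  then have "((\<lambda>a. s a b) \<longlongrightarrow> b) (at 0 within {0..})"
    by (simp only: t_definer_zero_left[OF assms])
  then show ?thesis
    by (rule tendsto_within_subset) auto
qed

lemma t_definer_uniform_at_0:
  assumes "t_definer s" "e > 0"
  shows "\<exists>\<delta>>0. \<forall>b\<in>{0..c}. s \<delta> b < b + e"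
proof -
  define h where "h = e / 2"
  define grid where "grid = (\<lambda>k. real k * h) ` {..nat \<lceil>c / h\<rceil>}"
  have h: "h > 0" using assms(2) by (simp add: h_def)
  have "\<forall>\<^sub>F \<delta> in at_right 0. 0 < \<delta> \<and> (\<forall>g\<in>grid. s \<delta> g < g + h)"
  proof (intro eventually_conj eventually_ball_finite ballI)
    fix g assume "g \<in> grid"
    then have "0 \<le> g" using h by (auto simp: grid_def)
    then show "\<forall>\<^sub>F \<delta> in at_right 0. s \<delta> g < g + h"
      using order_tendstoD(2)[OF t_definer_tendsto_at_right_0[OF assms(1)], of g "g + h"] h
      by simp
  qed (auto simp: grid_def eventually_at_right_less)
  then obtain \<delta> where \<delta>: "\<delta> > 0" "\<forall>g\<in>grid. s \<delta> g < g + h"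
    using eventually_happens' trivial_limit_at_right_real by blast
  have "s \<delta> b < b + e" if b: "b \<in> {0..c}" for b
  proof -
    \<comment> \<open>Monotonicity in b: round b up to the next grid point.\<close>
    define k where "k = nat \<lceil>b / h\<rceil>"
    have "real k = of_int \<lceil>b / h\<rceil>" using b h by (simp add: k_def)
    then have "b / h \<le> real k" "real k < b / h + 1" by linarith+
    then have k_bounds: "b \<le> real k * h" "real k * h < b + h"
      using h by (simp_all add: field_simps)
    have "k \<le> nat \<lceil>c / h\<rceil>"
      using b h unfolding k_def by (intro nat_mono ceiling_mono) (simp add: divide_right_mono)
    then have "real k * h \<in> grid" by (auto simp: grid_def)
    have "s \<delta> b \<le> s \<delta> (real k * h)"
      using t_definer_mono_right[OF assms(1)] \<delta>(1) b k_bounds(1) by simp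
    also have "\<dots> < real k * h + h" using \<delta>(2) \<open>real k * h \<in> grid\<close> by blast
    finally show ?thesis using k_bounds(2) by (simp add: h_def)
  qed
  then show ?thesis using \<delta>(1) by blast
qed

definition kuratowski_dist :: "'a set \<Rightarrow> ('a \<Rightarrow> 'a \<Rightarrow> real) \<Rightarrow> 'a \<Rightarrow> 'a \<Rightarrow> real" where
  "kuratowski_dist X d x y =
     (if x \<in> X \<and> y \<in> X then SUP z\<in>X. \<bar>min (d x z) 1 - min (d y z) 1\<bar> else 0)"

context
  fixes X :: "'a set" and d :: "'a \<Rightarrow> 'a \<Rightarrow> real"
  assumes nonneg: "\<And>x y. x \<in> X \<Longrightarrow> y \<in> X \<Longrightarrow> 0 \<le> d x y"
    and zero_iff: "\<And>x y. x \<in> X \<Longrightarrow> y \<in> X \<Longrightarrow> d x y = 0 \<longleftrightarrow> x = y"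
begin

lemma kuratowski_dist_ge:
  assumes "x \<in> X" "y \<in> X" "z \<in> X"
  shows "\<bar>min (d x z) 1 - min (d y z) 1\<bar> \<le> kuratowski_dist X d x y"
proof -
  have "bdd_above ((\<lambda>z. \<bar>min (d x z) 1 - min (d y z) 1\<bar>) ` X)"
  proof (rule bdd_aboveI2[of _ _ 1])
    fix z assume "z \<in> X"
    then have "0 \<le> d x z" "0 \<le> d y z" using assms nonneg by auto
    then show "\<bar>min (d x z) 1 - min (d y z) 1\<bar> \<le> 1" by (simp add: abs_le_iff min_def)
  qed
  then show ?thesis
    using cSUP_upper[OF assms(3)] assms(1,2) by (simp add: kuratowski_dist_def)
qed

lemma kuratowski_dist_le:
  assumes "x \<in> X" "y \<in> X" "\<And>z. z \<in> X \<Longrightarrow> \<bar>min (d x z) 1 - min (d y z) 1\<bar> \<le> c"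
  shows "kuratowski_dist X d x y \<le> c"
  using assms by (auto simp: kuratowski_dist_def intro: cSUP_least)

lemma Metric_space_kuratowski_dist: "Metric_space X (kuratowski_dist X d)"
proof
  fix x y
  show "0 \<le> kuratowski_dist X d x y"
    using kuratowski_dist_ge[of x y x] abs_ge_zero order_trans
    by (cases "x \<in> X \<and> y \<in> X") (auto simp: kuratowski_dist_def)
  show "kuratowski_dist X d x y = kuratowski_dist X d y x"
    by (auto simp: kuratowski_dist_def abs_minus_commute)
next
  fix x y assume xy: "x \<in> X" "y \<in> X"
  show "kuratowski_dist X d x y = 0 \<longleftrightarrow> x = y"
  proof
    assume "kuratowski_dist X d x y = 0"
    then have "min (d x y) 1 = 0"
      using kuratowski_dist_ge[OF xy xy(2)] zero_iff[OF xy(2) xy(2)] nonneg[OF xy] by simp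
    then show "x = y" using zero_iff[OF xy] by (simp add: min_def split: if_splits)
  qed (use xy in \<open>auto simp: kuratowski_dist_def zero_iff intro: cSUP_const\<close>)
next
  fix x y z assume xyz: "x \<in> X" "y \<in> X" "z \<in> X"
  show "kuratowski_dist X d x z \<le> kuratowski_dist X d x y + kuratowski_dist X d y z"
  proof (rule kuratowski_dist_le[OF xyz(1,3)])
    fix w assume w: "w \<in> X"
    have "\<bar>min (d x w) 1 - min (d z w) 1\<bar>
        \<le> \<bar>min (d x w) 1 - min (d y w) 1\<bar> + \<bar>min (d y w) 1 - min (d z w) 1\<bar>"
      using dist_triangle[of "min (d x w) 1" "min (d z w) 1" "min (d y w) 1"]
      by (simp only: dist_real_def)
    also have "\<dots> \<le> kuratowski_dist X d x y + kuratowski_dist X d y z"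
      using kuratowski_dist_ge[OF xyz(1,2) w] kuratowski_dist_ge[OF xyz(2,3) w] by (rule add_mono)
    finally show "\<bar>min (d x w) 1 - min (d z w) 1\<bar> \<le> kuratowski_dist X d x y + kuratowski_dist X d y z" .
  qed
qed

lemma kuratowski_dist_controls_dist:
  assumes "a \<in> X" "r > 0"
  shows "\<exists>\<delta>>0. \<forall>y\<in>X. kuratowski_dist X d a y < \<delta> \<longrightarrow> d a y < r"
proof (intro exI conjI ballI impI)
  show "0 < min r 1" using assms(2) by simp
  fix y assume "y \<in> X" "kuratowski_dist X d a y < min r 1"
  moreover have "min (d a y) 1 \<le> kuratowski_dist X d a y"
    using kuratowski_dist_ge[OF assms(1) \<open>y \<in> X\<close> \<open>y \<in> X\<close>] zero_iff[OF \<open>y \<in> X\<close> \<open>y \<in> X\<close>]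
      nonneg[OF assms(1) \<open>y \<in> X\<close>]
    by simp
  ultimately show "d a y < r" by (auto simp: min_def split: if_splits)
qed

end

lemma star_metric_nonneg:
  assumes "star_metric s X d" "x \<in> X" "y \<in> X"
  shows "0 \<le> d x y"
proof -
  have "\<forall>x\<in>X. \<forall>y\<in>X. 0 \<le> d x y"
    using assms(1) unfolding star_metric_def by (elim conjE) assumption
  then show ?thesis using assms(2,3) by blast
qed

lemma star_metric_zero_iff:
  assumes "star_metric s X d" "x \<in> X" "y \<in> X"
  shows "d x y = 0 \<longleftrightarrow> x = y"
proof -
  have "\<forall>x\<in>X. \<forall>y\<in>X. d x y = 0 \<longleftrightarrow> x = y"
    using assms(1) unfolding star_metric_def by (elim conjE) assumption
  then show ?thesis using assms(2,3) by blast
qed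

lemma star_metric_commute:
  assumes "star_metric s X d" "x \<in> X" "y \<in> X"
  shows "d x y = d y x"
proof -
  have "\<forall>x\<in>X. \<forall>y\<in>X. d x y = d y x"
    using assms(1) unfolding star_metric_def by (elim conjE) assumption
  then show ?thesis using assms(2,3) by blast
qed

lemma star_metric_triangle:
  assumes "star_metric s X d" "x \<in> X" "y \<in> X" "z \<in> X"
  shows "d x z \<le> s (d x y) (d y z)"
proof -
  have "\<forall>x\<in>X. \<forall>y\<in>X. \<forall>z\<in>X. d x y \<le> s (d x z) (d z y)"
    using assms(1) unfolding star_metric_def by (elim conjE) assumption
  then show ?thesis using assms(2-) by blast
qed

lemma star_metric_controls_kuratowski_dist:
  assumes "t_definer s" "star_metric s X d" "r > 0"
  shows "\<exists>\<delta>>0. \<forall>x\<in>X. \<forall>y\<in>X. d x y < \<delta> \<longrightarrow> kuratowski_dist X d x y < r"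
proof -
  note nonneg = star_metric_nonneg[OF assms(2)]
  obtain \<delta> where \<delta>: "\<delta> > 0" "\<forall>b\<in>{0..1}. s \<delta> b < b + r / 2"
    using t_definer_uniform_at_0[OF assms(1), of "r / 2"] assms(3) by auto
  have one_sided: "min (d x z) 1 \<le> min (d y z) 1 + r / 2"
    if xyz: "x \<in> X" "y \<in> X" "z \<in> X" and "d x y < \<delta>" for x y z
  proof (cases "d y z \<le> 1")
    case True
    have "d x z \<le> s (d x y) (d y z)" using star_metric_triangle[OF assms(2) xyz] .
    also have "\<dots> \<le> s \<delta> (d y z)"
      using t_definer_mono_left[OF assms(1)] nonneg xyz \<open>d x y < \<delta>\<close> by simp
    also have "\<dots> < d y z + r / 2" using \<delta>(2) True nonneg[OF xyz(2,3)] by simp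
    finally show ?thesis using True by linarith
  qed (use assms(3) in simp)
  have "kuratowski_dist X d x y < r" if xy: "x \<in> X" "y \<in> X" and "d x y < \<delta>" for x y
  proof -
    have "d y x < \<delta>" using star_metric_commute[OF assms(2) xy] \<open>d x y < \<delta>\<close> by simp
    have "kuratowski_dist X d x y \<le> r / 2"
    proof (rule kuratowski_dist_le[OF nonneg star_metric_zero_iff[OF assms(2)] xy])
      fix z assume "z \<in> X"
      then show "\<bar>min (d x z) 1 - min (d y z) 1\<bar> \<le> r / 2"
        using one_sided[OF xy \<open>z \<in> X\<close> \<open>d x y < \<delta>\<close>] one_sided[OF xy(2,1) \<open>z \<in> X\<close> \<open>d y x < \<delta>\<close>]
        by (simp only: abs_le_iff) linarith
    qed
    then show ?thesis using assms(3) by simp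
  qed
  then show ?thesis using \<delta>(1) by blast
qed

lemma star_topology_eq_mtopology:
  assumes "Metric_space X m"
    and d_small: "\<And>a r. a \<in> X \<Longrightarrow> r > 0 \<Longrightarrow> \<exists>\<delta>>0. \<forall>y\<in>X. m a y < \<delta> \<longrightarrow> d a y < r"
    and m_small: "\<And>a r. a \<in> X \<Longrightarrow> r > 0 \<Longrightarrow> \<exists>\<delta>>0. \<forall>y\<in>X. d a y < \<delta> \<longrightarrow> m a y < r"
  shows "star_topology X d = Metric_space.mtopology X m"
proof -
  interpret Metric_space X m by fact
  have "(\<lambda>U. U \<subseteq> X \<and> (\<forall>a\<in>U. \<exists>r>0. star_ball X d a r \<subseteq> U)) = openin mtopology"
  proof (intro ext iffI)
    fix U assume "U \<subseteq> X \<and> (\<forall>a\<in>U. \<exists>r>0. star_ball X d a r \<subseteq> U)"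
    then have "U \<subseteq> X" and U: "\<forall>a\<in>U. \<exists>r>0. star_ball X d a r \<subseteq> U" by auto
    have "\<exists>\<delta>>0. mball a \<delta> \<subseteq> U" if "a \<in> U" for a
    proof -
      have "a \<in> X" using \<open>U \<subseteq> X\<close> \<open>a \<in> U\<close> by blast
      obtain r where "r > 0" "star_ball X d a r \<subseteq> U" using U \<open>a \<in> U\<close> by blast
      obtain \<delta> where "\<delta> > 0" "\<forall>y\<in>X. m a y < \<delta> \<longrightarrow> d a y < r"
        using d_small[OF \<open>a \<in> X\<close> \<open>r > 0\<close>] by blast
      then have "mball a \<delta> \<subseteq> star_ball X d a r" by (auto simp: star_ball_def)
      with \<open>\<delta> > 0\<close> \<open>star_ball X d a r \<subseteq> U\<close> show ?thesis by blast
    qed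
    with \<open>U \<subseteq> X\<close> show "openin mtopology U" by (simp add: openin_mtopology)
  next
    fix U assume "openin mtopology U"
    then have "U \<subseteq> X" and U: "\<forall>a\<in>U. \<exists>r>0. mball a r \<subseteq> U"
      by (auto simp: openin_mtopology)
    have "\<exists>\<delta>>0. star_ball X d a \<delta> \<subseteq> U" if "a \<in> U" for a
    proof -
      have "a \<in> X" using \<open>U \<subseteq> X\<close> \<open>a \<in> U\<close> by blast
      obtain r where "r > 0" "mball a r \<subseteq> U" using U \<open>a \<in> U\<close> by blast
      obtain \<delta> where "\<delta> > 0" "\<forall>y\<in>X. d a y < \<delta> \<longrightarrow> m a y < r"
        using m_small[OF \<open>a \<in> X\<close> \<open>r > 0\<close>] by blast
      then have "star_ball X d a \<delta> \<subseteq> mball a r" using \<open>a \<in> X\<close> by (auto simp: star_ball_def)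
      with \<open>\<delta> > 0\<close> \<open>mball a r \<subseteq> U\<close> show ?thesis by blast
    qed
    with \<open>U \<subseteq> X\<close> show "U \<subseteq> X \<and> (\<forall>a\<in>U. \<exists>r>0. star_ball X d a r \<subseteq> U)"
      by blast
  qed
  then show ?thesis unfolding star_topology_def by (simp only: openin_inverse)
qed

theorem theorem2p4:
  fixes star :: "real \<Rightarrow> real \<Rightarrow> real" and X :: "'a set" and d :: "'a \<Rightarrow> 'a \<Rightarrow> real"
  assumes "X \<noteq> {}"
    and "t_definer star"
    and "star_metric star X d"
  shows "metrizable_space (star_topology X d)"
proof -
  note d_nonneg = star_metric_nonneg[OF assms(3)]
    and d_zero_iff = star_metric_zero_iff[OF assms(3)]
  have metric: "Metric_space X (kuratowski_dist X d)"
    by (rule Metric_space_kuratowski_dist[of X d, OF d_nonneg d_zero_iff])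
  have "star_topology X d = Metric_space.mtopology X (kuratowski_dist X d)"
  proof (rule star_topology_eq_mtopology[OF metric])
    show "\<exists>\<delta>>0. \<forall>y\<in>X. kuratowski_dist X d a y < \<delta> \<longrightarrow> d a y < r"
      if "a \<in> X" "r > 0" for a r
      using kuratowski_dist_controls_dist[of X d, OF d_nonneg d_zero_iff that] .
    show "\<exists>\<delta>>0. \<forall>y\<in>X. d a y < \<delta> \<longrightarrow> kuratowski_dist X d a y < r"
      if "a \<in> X" "r > 0" for a r
      using star_metric_controls_kuratowski_dist[OF assms(2,3) \<open>r > 0\<close>] \<open>a \<in> X\<close> by blast
  qed
  then show ?thesis using Metric_space.metrizable_space_mtopology[OF metric] by simp
qed

end
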